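(* Let $k$ be a number field, $r$ a nonzero integer, $R$ the localization of the ring of integers of $k$ at the powers of $r$, $K$ a field with an $R$-algebra structure, and $B(\mathbf y)=\sum_{\kappa=1}^3B^{(\kappa)}y_\kappa$ a symmetric $3\times3$ matrix of linear forms with coefficients in $R$. Assume that the projective plane curves $\det B(\mathbf y)=0$ and $\det B^\bullet(\mathbf x)=0$ are elliptic curves. Then the $3$-dimensional abelian subalgebras of $\mathfrak g_B(K)$ that are contained in $V=U\oplus W$ are exactly the subspaces $\psi(M)(U)$ for $M\in\mathrm{GL}_2(K)$.
   Context: Let $U=W=T=K^3$ with bases $e_1,e_2,e_3$, $f_1,f_2,f_3$, $g_1,g_2,g_3$; let $\phi:U\times W\to T$, $\phi(u,w)=\sum_\kappa (uB^{(\kappa)}w^{\mathrm T})g_\kappa$ (coordinates as row vectors). $\mathfrak g_B(K)$ is $U\oplus W\oplus T$ with bracket $[(u,w,t),(u',w',t')]=\phi(u,w')-\phi(u',w)\in T$. The bar map $U\to W$, $\sum u_je_j\mapsto\sum u_jf_j$, and its inverse $W\to U$ are both written $x\mapsto\bar x$. For $M=\begin{pmatrix}a&b\\c&d\end{pmatrix}\in\mathrm{GL}_2(K)$, $\psi(M)$ is the automorphism $(u,w,t)\mapsto(au+b\bar w,\,c\bar u+dw,\,(ad-bc)t)$ of $\mathfrak g_B(K)$. The dual matrix is $B^\bullet(\mathbf x)=\big(\sum_{j=1}^3B^{(\kappa)}_{ij}x_j\big)_{i\kappa}$. *)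

theory Defs
  imports "HOL-Analysis.Analysis" "HOL-Algebra.Algebraic_Closure_Type"
begin

definition number_field :: "complex set \<Rightarrow> bool" where
  "number_field k \<longleftrightarrow>
     0 \<in> k \<and> 1 \<in> k \<and>
     (\<forall>x\<in>k. \<forall>y\<in>k. x + y \<in> k \<and> x - y \<in> k \<and> x * y \<in> k) \<and>
     (\<forall>x\<in>k. x \<noteq> 0 \<longrightarrow> inverse x \<in> k) \<and>
     (\<exists>S. finite S \<and> S \<subseteq> k \<and>
        (\<forall>x\<in>k. \<exists>q. (\<forall>s\<in>S. q s \<in> \<rat>) \<and> x = (\<Sum>s\<in>S. q s * s)))"

definition ring_of_integers :: "complex set \<Rightarrow> complex set" where
  "ring_of_integers k =
     {x \<in> k. \<exists>p :: int poly. Polynomial.lead_coeff p = 1 \<and> Polynomial.poly (map_poly of_int p) x = 0}"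

definition loc_ring :: "complex set \<Rightarrow> int \<Rightarrow> complex set" where
  "loc_ring k r = {x. \<exists>a\<in>ring_of_integers k. \<exists>n::nat. x = a / (of_int r) ^ n}"

text \<open>A ring homomorphism from the subring R to a field (the R-algebra structure).\<close>

definition ring_hom_on :: "complex set \<Rightarrow> (complex \<Rightarrow> 'K::field) \<Rightarrow> bool" where
  "ring_hom_on R f \<longleftrightarrow> f 1 = 1 \<and>
     (\<forall>x\<in>R. \<forall>y\<in>R. f (x + y) = f x + f y \<and> f (x * y) = f x * f y)"

text \<open>A 3x3 matrix of linear forms in three variables, given by its coefficient
matrices: A \<kappa> i j is the (i,j) entry of the coefficient matrix of y_\<kappa>.\<close>

definition lin_matrix :: "(3 \<Rightarrow> 3 \<Rightarrow> 3 \<Rightarrow> 'a::comm_ring_1) \<Rightarrow> 'a^3 \<Rightarrow> 'a^3^3" where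
  "lin_matrix A y = (\<chi> i j. \<Sum>\<kappa>\<in>UNIV. A \<kappa> i j * y $ \<kappa>)"

definition det_form :: "(3 \<Rightarrow> 3 \<Rightarrow> 3 \<Rightarrow> 'a::comm_ring_1) \<Rightarrow> 'a^3 \<Rightarrow> 'a" where
  "det_form A y = det (lin_matrix A y)"

text \<open>The formal partial derivative of det A(y) with respect to y_m
(multilinearity of det in the rows: replace one row by its derivative).\<close>

definition det_form_deriv :: "(3 \<Rightarrow> 3 \<Rightarrow> 3 \<Rightarrow> 'a::comm_ring_1) \<Rightarrow> 3 \<Rightarrow> 'a^3 \<Rightarrow> 'a" where
  "det_form_deriv A m y =
     (\<Sum>i\<in>UNIV. det (\<chi> i' j. if i' = i then A m i j else lin_matrix A y $ i' $ j))"

definition singular_point :: "(3 \<Rightarrow> 3 \<Rightarrow> 3 \<Rightarrow> 'a::comm_ring_1) \<Rightarrow> 'a^3 \<Rightarrow> bool" where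
  "singular_point A z \<longleftrightarrow> z \<noteq> 0 \<and> det_form A z = 0 \<and> (\<forall>m. det_form_deriv A m z = 0)"

text \<open>The dual matrix: Bdual(x)_(i,kappa) = sum_j B^(kappa)_(i,j) x_j, written again as a
matrix of linear forms in x (coefficient of x_j at entry (i,\<kappa>) is B^(kappa)_(i,j)).\<close>

definition dual_coeffs :: "(3 \<Rightarrow> 3 \<Rightarrow> 3 \<Rightarrow> 'a) \<Rightarrow> 3 \<Rightarrow> 3 \<Rightarrow> 3 \<Rightarrow> 'a" where
  "dual_coeffs B = (\<lambda>j i \<kappa>. B \<kappa> i j)"

text \<open>The plane cubic det A = 0 with coefficients in a number field k \<subseteq> \<complex> is an
elliptic curve over k: it is smooth (over the algebraically closed field \<complex>)
and has a k-rational point.\<close>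

definition elliptic_over :: "complex set \<Rightarrow> (3 \<Rightarrow> 3 \<Rightarrow> 3 \<Rightarrow> complex) \<Rightarrow> bool" where
  "elliptic_over k A \<longleftrightarrow>
     (\<forall>z::complex^3. \<not> singular_point A z) \<and>
     (\<exists>y::complex^3. y \<noteq> 0 \<and> (\<forall>\<kappa>. y $ \<kappa> \<in> k) \<and> det_form A y = 0)"

definition geom_smooth :: "(3 \<Rightarrow> 3 \<Rightarrow> 3 \<Rightarrow> 'F::field) \<Rightarrow> bool" where
  "geom_smooth A \<longleftrightarrow>
     (\<forall>z::'F alg_closure^3. \<not> singular_point (\<lambda>\<kappa> i j. to_ac (A \<kappa> i j)) z)"

text \<open>The Lie algebra g_B(K) = U \<oplus> W \<oplus> T with U = W = T = K^3, elements written
as triples (u,w,t).  The bar maps are the identity on coordinates.\<close>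

type_synonym 'K gelem = "('K^3) \<times> ('K^3) \<times> ('K^3)"

definition gscale :: "'K::field \<Rightarrow> 'K gelem \<Rightarrow> 'K gelem" where
  "gscale c x = (case x of (u, w, t) \<Rightarrow> (c *s u, c *s w, c *s t))"

definition phiB :: "(3 \<Rightarrow> 3 \<Rightarrow> 3 \<Rightarrow> 'K::field) \<Rightarrow> 'K^3 \<Rightarrow> 'K^3 \<Rightarrow> 'K^3" where
  "phiB BK u w = (\<chi> \<kappa>. \<Sum>i\<in>UNIV. \<Sum>j\<in>UNIV. u $ i * BK \<kappa> i j * w $ j)"

definition gbracket :: "(3 \<Rightarrow> 3 \<Rightarrow> 3 \<Rightarrow> 'K::field) \<Rightarrow> 'K gelem \<Rightarrow> 'K gelem \<Rightarrow> 'K gelem" where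
  "gbracket BK x y = (case x of (u, w, t) \<Rightarrow> case y of (u', w', t') \<Rightarrow>
      (0, 0, phiB BK u w' - phiB BK u' w))"

definition Vsub :: "'K::field gelem set" where
  "Vsub = {(u, w, 0) | u w. True}"

definition Usub :: "'K::field gelem set" where
  "Usub = {(u, 0, 0) | u. True}"

definition abelian_subalgebra :: "(3 \<Rightarrow> 3 \<Rightarrow> 3 \<Rightarrow> 'K::field) \<Rightarrow> 'K gelem set \<Rightarrow> bool" where
  "abelian_subalgebra BK S \<longleftrightarrow>
     module.subspace gscale S \<and> (\<forall>x\<in>S. \<forall>y\<in>S. gbracket BK x y = (0, 0, 0))"

definition gdim :: "'K::field gelem set \<Rightarrow> nat" where
  "gdim S = vector_space.dim gscale S"

text \<open>psi(M) for M = (a b; c d).\<close>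

definition psi :: "'K::field \<times> 'K \<times> 'K \<times> 'K \<Rightarrow> 'K gelem \<Rightarrow> 'K gelem" where
  "psi M x = (case M of (a, b, c, d) \<Rightarrow> case x of (u, w, t) \<Rightarrow>
      (a *s u + b *s w, c *s u + d *s w, (a * d - b * c) *s t))"

end

(* A three-dimensional subspace S of V = U + W is the image of z |-> (z M, z N, 0) for a pair
   of 3x3 matrices (M, N) with jointly injective rows, and S is abelian exactly when
   phi(M_i, N_j) = phi(M_j, N_i) for all i, j.  Smoothness of the dual curve forces B^dual(w)
   to have rank at least 2 for w <> 0: at a point of rank at most 1 all 2x2 minors vanish, hence
   so do the cubic and its partial derivatives.  Equivalently, for w <> 0 the vectors a with
   phi(a, w) = 0 span at most a line.  This excludes a commuting pair with M singular but
   nonzero: if M has rank 2, a left null vector z of M gives w = z N <> 0 annihilated by the row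
   space of M; if M = p q^T has rank 1, q is annihilated by the image under N of the plane
   orthogonal to p, which is two-dimensional.  So either M = 0, or M is invertible; in the
   latter case det(N - l M) has a root l in the algebraic closure, N - l M still commutes with M,
   hence vanishes, and l lies in K.  Either way S = {(a u, c u, 0)}, which is psi(M)(U) for any
   invertible M with first column (a, c).  Only the symmetry of B and the smoothness of the dual
   curve over the algebraic closure of K enter the argument. *)

theory Submission
  imports Defs
begin

no_notation fps_nth (infixl \<open>$\<close> 75)

section \<open>Cross products in dimension three\<close>

definition cross :: "'a::comm_ring_1^3 \<Rightarrow> 'a^3 \<Rightarrow> 'a^3" where
  "cross a b = vector [a$2 * b$3 - a$3 * b$2, a$3 * b$1 - a$1 * b$3, a$1 * b$2 - a$2 * b$1]"

definition dot :: "'a::comm_semiring_1^'n \<Rightarrow> 'a^'n \<Rightarrow> 'a" where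
  "dot a b = (\<Sum>i\<in>UNIV. a$i * b$i)"

lemma vec3_eq_iff: "(x::'a^3) = y \<longleftrightarrow> x$1 = y$1 \<and> x$2 = y$2 \<and> x$3 = y$3"
  by (simp add: vec_eq_iff forall_3)

lemma cross_nth [simp]:
  "cross a b $ 1 = a$2 * b$3 - a$3 * b$2"
  "cross a b $ 2 = a$3 * b$1 - a$1 * b$3"
  "cross a b $ 3 = a$1 * b$2 - a$2 * b$1"
  by (simp_all add: cross_def)

lemma dot3: "dot a (b::'a::comm_semiring_1^3) = a$1 * b$1 + a$2 * b$2 + a$3 * b$3"
  by (simp add: dot_def sum_3)

lemma dot_commute: "dot a b = dot b a"
  by (simp add: dot_def mult.commute)

lemma cross_commute: "cross b a = - cross a b"
  by (simp add: vec3_eq_iff)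

lemma cross_cross: "cross c (cross a b) = dot c b *s a - dot c a *s b"
  by (simp add: vec3_eq_iff dot3 algebra_simps)

lemma cross_eq_0_imp_collinear:
  fixes a b :: "'a::field^3"
  assumes "cross a b = 0" and "b \<noteq> 0"
  shows "\<exists>t. a = t *s b"
proof -
  have eqs: "a$2 * b$3 = a$3 * b$2" "a$3 * b$1 = a$1 * b$3" "a$1 * b$2 = a$2 * b$1"
    using assms(1) by (simp_all add: vec3_eq_iff)
  consider "b$1 \<noteq> 0" | "b$2 \<noteq> 0" | "b$3 \<noteq> 0"
    using assms(2) by (auto simp: vec3_eq_iff)
  then show ?thesis
  proof cases
    case 1
    with eqs show ?thesis by (intro exI[of _ "a$1 / b$1"]) (auto simp: vec3_eq_iff field_simps)
  next
    case 2
    with eqs show ?thesis by (intro exI[of _ "a$2 / b$2"]) (auto simp: vec3_eq_iff field_simps)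
  next
    case 3
    with eqs show ?thesis by (intro exI[of _ "a$3 / b$3"]) (auto simp: vec3_eq_iff field_simps)
  qed
qed

lemma cross_eq_0_imp_dependent:
  fixes a b :: "'a::field^3"
  assumes "cross a b = 0"
  shows "\<exists>s t. (s \<noteq> 0 \<or> t \<noteq> 0) \<and> s *s a + t *s b = 0"
proof (cases "a = 0")
  case True
  then show ?thesis by (intro exI[of _ 1] exI[of _ 0]) simp
next
  case False
  have "cross b a = 0" using assms cross_commute[of b a] by simp
  then obtain t where "b = t *s a" using cross_eq_0_imp_collinear False by blast
  then show ?thesis by (intro exI[of _ t] exI[of _ "-1"]) simp
qed

lemma cross_neq_0_imp_independent:
  fixes a b :: "'a::field^3"
  assumes "cross a b \<noteq> 0" and "s *s a + t *s b = 0"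
  shows "s = 0 \<and> t = 0"
proof -
  have "s *s cross a b = cross (s *s a + t *s b) b" "t *s cross a b = cross a (s *s a + t *s b)"
    by (simp_all add: vec3_eq_iff algebra_simps)
  then have "s *s cross a b = 0" "t *s cross a b = 0"
    using assms(2) by (simp_all add: vec3_eq_iff)
  then show ?thesis using assms(1) by simp
qed

lemma cross_eq_0_if_orthogonal:
  fixes a b c d :: "'a::field^3"
  assumes "dot a c = 0" "dot b c = 0" "dot a d = 0" "dot b d = 0" and "cross a b \<noteq> 0"
  shows "cross c d = 0"
proof -
  have "cross c (cross a b) = 0" "cross d (cross a b) = 0"
    using assms(1-4) by (simp_all add: cross_cross dot_commute)
  then obtain s t where c: "c = s *s cross a b" and d: "d = t *s cross a b"
    using cross_eq_0_imp_collinear assms(5) by metis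
  show ?thesis unfolding c d by (simp add: vec3_eq_iff algebra_simps)
qed

lemma exists_independent_orthogonal_pair:
  fixes p :: "'a::field^3"
  assumes "p \<noteq> 0"
  shows "\<exists>a b. dot a p = 0 \<and> dot b p = 0 \<and> cross a b \<noteq> 0"
proof -
  consider "p$1 \<noteq> 0" | "p$2 \<noteq> 0" | "p$3 \<noteq> 0"
    using assms by (auto simp: vec3_eq_iff)
  then show ?thesis
  proof cases
    case 1
    then show ?thesis
      by (intro exI[of _ "vector [p$2, - p$1, 0]"] exI[of _ "vector [p$3, 0, - p$1]"])
        (simp add: dot3 vec3_eq_iff algebra_simps)
  next
    case 2
    then show ?thesis
      by (intro exI[of _ "vector [- p$2, p$1, 0]"] exI[of _ "vector [0, p$3, - p$2]"])
        (simp add: dot3 vec3_eq_iff algebra_simps)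
  next
    case 3
    then show ?thesis
      by (intro exI[of _ "vector [- p$3, 0, p$1]"] exI[of _ "vector [0, - p$3, p$2]"])
        (simp add: dot3 vec3_eq_iff algebra_simps)
  qed
qed

section \<open>Smoothness of the dual curve\<close>

definition replace_row :: "'a^'n^'m \<Rightarrow> 'm \<Rightarrow> 'a^'n \<Rightarrow> 'a^'n^'m" where
  "replace_row M i v = (\<chi> i' j. if i' = i then v$j else M$i'$j)"

lemma det_replace_row:
  fixes M :: "'a::comm_ring_1^3^3"
  shows "det (replace_row M i v) = v$1 * cross (column 2 M) (column 3 M) $ i
     + v$2 * cross (column 3 M) (column 1 M) $ i + v$3 * cross (column 1 M) (column 2 M) $ i"
  using exhaust_3[of i]
  by (elim disjE) (simp_all add: det_3 replace_row_def column_def algebra_simps)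

lemma det_replace_row_eq_0:
  fixes M :: "'a::comm_ring_1^3^3"
  assumes "\<And>k l. cross (column k M) (column l M) = 0"
  shows "det (replace_row M i v) = 0"
  by (simp add: det_replace_row assms)

definition coeff_matrix :: "(3 \<Rightarrow> 3 \<Rightarrow> 3 \<Rightarrow> 'a) \<Rightarrow> 3 \<Rightarrow> 'a^3^3" where
  "coeff_matrix BK \<kappa> = (\<chi> i j. BK \<kappa> i j)"

lemma column_dual_lin_matrix:
  "column \<kappa> (lin_matrix (dual_coeffs BK) w) = coeff_matrix BK \<kappa> *v w"
  by (simp add: column_def lin_matrix_def dual_coeffs_def coeff_matrix_def
      matrix_vector_mult_def vec_eq_iff mult.commute)

lemma singular_point_dual_if_columns_collinear:
  fixes BK :: "3 \<Rightarrow> 3 \<Rightarrow> 3 \<Rightarrow> 'a::comm_ring_1"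
  assumes "w \<noteq> 0" and "\<And>k l. cross (coeff_matrix BK k *v w) (coeff_matrix BK l *v w) = 0"
  shows "singular_point (dual_coeffs BK) w"
proof -
  let ?M = "lin_matrix (dual_coeffs BK) w"
  have rep0: "det (replace_row ?M i v) = 0" for i v
    by (rule det_replace_row_eq_0) (simp add: column_dual_lin_matrix assms(2))
  have "?M = replace_row ?M 1 (?M$1)"
    by (simp add: replace_row_def vec_eq_iff)
  then have "det_form (dual_coeffs BK) w = 0"
    unfolding det_form_def using rep0 by metis
  moreover have "det_form_deriv (dual_coeffs BK) m w = 0" for m
  proof -
    have "det_form_deriv (dual_coeffs BK) m w =
        (\<Sum>i\<in>UNIV. det (replace_row ?M i (\<chi> j. dual_coeffs BK m i j)))"
      unfolding det_form_deriv_def replace_row_def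
      by (intro sum.cong refl arg_cong[where f = det]) (simp add: vec_eq_iff)
    then show ?thesis by (simp add: rep0)
  qed
  ultimately show ?thesis using assms(1) by (simp add: singular_point_def)
qed

lemma phiB_nth: "phiB BK u w $ \<kappa> = dot u (coeff_matrix BK \<kappa> *v w)"
  by (simp add: phiB_def dot_def coeff_matrix_def matrix_vector_mult_def
      sum_distrib_left mult.assoc)

lemma phiB_commute:
  assumes "\<forall>\<kappa> i j. BK \<kappa> i j = BK \<kappa> j i"
  shows "phiB BK u w = phiB BK w u"
  using assms by (simp add: phiB_def vec_eq_iff sum_3 algebra_simps)

lemma phiB_vector_matrix_left:
  fixes M :: "'a::field^3^3"
  shows "phiB BK (z v* M) w = z v* (\<chi> i. phiB BK (M$i) w)"
  by (simp add: phiB_def vector_matrix_mult_def vec_eq_iff sum_3 algebra_simps)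

lemma phiB_vector_matrix_right:
  fixes N :: "'a::field^3^3"
  shows "phiB BK u (z v* N) = z v* (\<chi> j. phiB BK u (N$j))"
  by (simp add: phiB_def vector_matrix_mult_def vec_eq_iff sum_3 algebra_simps)

lemma phiB_scale_left: "phiB BK (c *s u) w = c *s phiB BK u w"
  by (simp add: phiB_def vec_eq_iff sum_3 algebra_simps)

lemma phiB_scale_right: "phiB BK u (c *s w) = c *s phiB BK u w"
  by (simp add: phiB_def vec_eq_iff sum_3 algebra_simps)

lemma phiB_diff_right: "phiB BK u (w - w') = phiB BK u w - phiB BK u w'"
  by (simp add: phiB_def vec_eq_iff sum_3 algebra_simps)

lemma phiB_to_ac:
  "phiB (\<lambda>\<kappa> i j. to_ac (BK \<kappa> i j)) (\<chi> i. to_ac (u$i)) (\<chi> i. to_ac (w$i))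
     = (\<chi> \<kappa>. to_ac (phiB BK u w $ \<kappa>))"
  by (simp add: phiB_def vec_eq_iff to_ac_sum)

(* Equivalently, the dual matrix B^dual(w) has rank at least 2 for every w <> 0. *)
definition phi_nondegenerate :: "(3 \<Rightarrow> 3 \<Rightarrow> 3 \<Rightarrow> 'a::field) \<Rightarrow> bool" where
  "phi_nondegenerate BK \<longleftrightarrow>
     (\<forall>w a b. w \<noteq> 0 \<longrightarrow> phiB BK a w = 0 \<longrightarrow> phiB BK b w = 0 \<longrightarrow> cross a b = 0)"

lemma phi_nondegenerateD:
  "phi_nondegenerate BK \<Longrightarrow> w \<noteq> 0 \<Longrightarrow> phiB BK a w = 0 \<Longrightarrow> phiB BK b w = 0 \<Longrightarrow>
    cross a b = 0"
  unfolding phi_nondegenerate_def by blast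

lemma geom_smooth_dual_imp_phi_nondegenerate:
  fixes BK :: "3 \<Rightarrow> 3 \<Rightarrow> 3 \<Rightarrow> 'a::field"
  assumes "geom_smooth (dual_coeffs BK)"
  shows "phi_nondegenerate (\<lambda>\<kappa> i j. to_ac (BK \<kappa> i j))"
  unfolding phi_nondegenerate_def
proof (intro allI impI)
  fix w a b :: "'a alg_closure^3"
  let ?BK = "\<lambda>\<kappa> i j. to_ac (BK \<kappa> i j)"
  assume w: "w \<noteq> 0" and a: "phiB ?BK a w = 0" and b: "phiB ?BK b w = 0"
  show "cross a b = 0"
  proof (rule ccontr)
    assume ab: "cross a b \<noteq> 0"
    have "dot a (coeff_matrix ?BK \<kappa> *v w) = 0" "dot b (coeff_matrix ?BK \<kappa> *v w) = 0" for \<kappa>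
      using a b by (metis phiB_nth zero_index)+
    then have "cross (coeff_matrix ?BK k *v w) (coeff_matrix ?BK l *v w) = 0" for k l
      using cross_eq_0_if_orthogonal ab by blast
    then have "singular_point (dual_coeffs ?BK) w"
      by (rule singular_point_dual_if_columns_collinear[OF w])
    moreover have "dual_coeffs ?BK = (\<lambda>\<kappa> i j. to_ac (dual_coeffs BK \<kappa> i j))"
      by (simp add: dual_coeffs_def)
    ultimately show False using assms unfolding geom_smooth_def by simp
  qed
qed

lemma phi_nondegenerate_of_to_ac:
  fixes BK :: "3 \<Rightarrow> 3 \<Rightarrow> 3 \<Rightarrow> 'a::field"
  assumes "phi_nondegenerate (\<lambda>\<kappa> i j. to_ac (BK \<kappa> i j))"
  shows "phi_nondegenerate BK"
  unfolding phi_nondegenerate_def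
proof (intro allI impI)
  fix w a b :: "'a^3"
  assume "w \<noteq> 0" "phiB BK a w = 0" "phiB BK b w = 0"
  then have "cross (\<chi> i. to_ac (a$i)) (\<chi> i. to_ac (b$i)) = 0"
    by (intro phi_nondegenerateD[OF assms, of "\<chi> i. to_ac (w$i)"])
      (simp_all add: phiB_to_ac vec_eq_iff)
  then show "cross a b = 0" by (simp add: vec3_eq_iff flip: to_ac_mult)
qed

section \<open>Pairs of matrices whose rows commute under \<open>\<phi>\<close>\<close>

definition phi_commuting :: "(3 \<Rightarrow> 3 \<Rightarrow> 3 \<Rightarrow> 'a::field) \<Rightarrow> 'a^3^3 \<Rightarrow> 'a^3^3 \<Rightarrow> bool" where
  "phi_commuting BK M N \<longleftrightarrow> (\<forall>i j. phiB BK (M$i) (N$j) = phiB BK (M$j) (N$i))"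

definition jointly_injective :: "'a::comm_semiring_1^'n^'m \<Rightarrow> 'a^'n^'m \<Rightarrow> bool" where
  "jointly_injective M N \<longleftrightarrow> (\<forall>z. z v* M = 0 \<longrightarrow> z v* N = 0 \<longrightarrow> z = 0)"

lemma axis_vector_matrix_mult [simp]:
  fixes M :: "'a::comm_semiring_1^'n^'m"
  shows "axis i 1 v* M = M$i"
  by (simp add: vec_eq_iff vector_matrix_mult_def axis_def if_distrib if_distribR
      cong del: if_weak_cong)

lemma vector_matrix_mult_mat [simp]:
  fixes z :: "'a::comm_semiring_1^'n"
  shows "z v* mat c = c *s z"
  by (simp add: vector_matrix_mult_def mat_def vec_eq_iff if_distrib if_distribR mult.commute
      cong: if_cong)

lemma row_matrix_mul_mat [simp]:
  fixes M :: "'a::comm_semiring_1^'n^'m"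
  shows "(M ** mat c) $ i = c *s M $ i"
  by (simp add: matrix_matrix_mult_def mat_def vec_eq_iff if_distrib if_distribR mult.commute
      cong: if_cong)

lemma phi_commuting_vector_matrix:
  assumes "phi_commuting BK M N"
  shows "phiB BK (z v* M) (N$i) = phiB BK (M$i) (z v* N)"
  using assms by (simp add: phi_commuting_def phiB_vector_matrix_left phiB_vector_matrix_right)

lemma phi_commuting_vector_matrix_both:
  assumes "phi_commuting BK M N"
  shows "phiB BK (z v* M) (z' v* N) = phiB BK (z' v* M) (z v* N)"
proof -
  have "phiB BK (z v* M) (z' v* N) = z' v* (\<chi> j. phiB BK (z v* M) (N$j))"
    by (rule phiB_vector_matrix_right)
  also have "\<dots> = z' v* (\<chi> j. phiB BK (M$j) (z v* N))"
    using phi_commuting_vector_matrix[OF assms] by simp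
  also have "\<dots> = phiB BK (z' v* M) (z v* N)"
    by (rule phiB_vector_matrix_left[symmetric])
  finally show ?thesis .
qed

lemma phi_commuting_kernel:
  assumes "phi_commuting BK M N" and "z v* M = 0"
  shows "phiB BK (M$i) (z v* N) = 0"
  using phi_commuting_vector_matrix[OF assms(1)] assms(2)
  by (metis phiB_scale_left vector_smult_lzero)

lemma phi_commuting_swap:
  assumes "\<forall>\<kappa> i j. BK \<kappa> i j = BK \<kappa> j i" and "phi_commuting BK M N"
  shows "phi_commuting BK N M"
  using assms(2) phiB_commute[OF assms(1)] unfolding phi_commuting_def by metis

lemma phi_commuting_pencil:
  assumes "\<forall>\<kappa> i j. BK \<kappa> i j = BK \<kappa> j i" and "phi_commuting BK M N"
  shows "phi_commuting BK M (N - M ** mat l)"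
proof -
  have "phiB BK (M$i) (M$j) = phiB BK (M$j) (M$i)" for i j
    using phiB_commute[OF assms(1)] by metis
  then show ?thesis
    using assms(2) by (simp add: phi_commuting_def phiB_diff_right phiB_scale_left
        phiB_commute[OF assms(1), of _ "l *s _"])
qed

lemma phi_commuting_mat:
  assumes "\<forall>\<kappa> i j. BK \<kappa> i j = BK \<kappa> j i"
  shows "phi_commuting BK (mat a) (mat c)"
proof -
  have mat_row: "(mat x :: 'a^3^3)$i = x *s axis i 1" for x i
    by (simp add: mat_def axis_def vec_eq_iff)
  show ?thesis
    unfolding phi_commuting_def mat_row
    using phiB_commute[OF assms, of "axis _ 1" "axis _ 1"]
    by (simp add: phiB_scale_left phiB_scale_right)
qed

lemma det_eq_0_imp_left_null_vector:
  fixes M :: "'a::field^'n^'n"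
  assumes "det M = 0"
  obtains z where "z \<noteq> 0" "z v* M = 0"
proof -
  have "\<not> invertible (transpose M)"
    using assms by (simp add: invertible_det_nz det_transpose)
  then have "\<not> (\<exists>B. B ** transpose M = mat 1)"
    by (simp add: invertible_left_inverse)
  then show ?thesis
    using that by (auto simp: matrix_left_invertible_ker)
qed

lemma commuting_singular_rows_collinear:
  assumes nd: "phi_nondegenerate BK" and inj: "jointly_injective M N"
    and com: "phi_commuting BK M N" and "det M = 0"
  shows "cross (M$i) (M$j) = 0"
proof -
  obtain z where "z \<noteq> 0" "z v* M = 0"
    using det_eq_0_imp_left_null_vector \<open>det M = 0\<close> by blast
  then have "z v* N \<noteq> 0" using inj unfolding jointly_injective_def by blast
  then show ?thesis
    using phi_nondegenerateD[OF nd] phi_commuting_kernel[OF com \<open>z v* M = 0\<close>] by blast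
qed

lemma commuting_not_rank_one:
  assumes sym: "\<forall>\<kappa> i j. BK \<kappa> i j = BK \<kappa> j i" and nd: "phi_nondegenerate BK"
    and inj: "jointly_injective M N" and com: "phi_commuting BK M N"
    and rank_one: "\<And>i. M$i = p$i *s q" and "p \<noteq> 0" and "q \<noteq> 0"
  shows False
proof -
  obtain z1 z2 where z: "dot z1 p = 0" "dot z2 p = 0" and "cross z1 z2 \<noteq> 0"
    using exists_independent_orthogonal_pair \<open>p \<noteq> 0\<close> by blast
  have "z v* M = dot z p *s q" for z
    by (simp add: vec3_eq_iff vector_matrix_mult_def sum_3 dot3 rank_one algebra_simps)
  then have kernel: "z v* M = 0" if "dot z p = 0" for z
    using that by simp
  obtain i where "p$i \<noteq> 0" using \<open>p \<noteq> 0\<close> by (metis vec_eq_iff zero_index)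
  have annihilates_q: "phiB BK (z v* N) q = 0" if "dot z p = 0" for z
  proof -
    have "p$i *s phiB BK q (z v* N) = 0"
      using phi_commuting_kernel[OF com kernel[OF that], of i]
      by (simp add: rank_one phiB_scale_left)
    then show ?thesis using \<open>p$i \<noteq> 0\<close> phiB_commute[OF sym] by simp
  qed
  have "cross (z1 v* N) (z2 v* N) = 0"
    using phi_nondegenerateD[OF nd \<open>q \<noteq> 0\<close>] annihilates_q z by blast
  then obtain s t where st: "s \<noteq> 0 \<or> t \<noteq> 0" "s *s (z1 v* N) + t *s (z2 v* N) = 0"
    using cross_eq_0_imp_dependent by blast
  let ?z = "s *s z1 + t *s z2"
  have "dot ?z p = s * dot z1 p + t * dot z2 p"
    by (simp add: dot3 algebra_simps)
  then have "?z v* M = 0"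
    using z kernel by simp
  moreover have "?z v* N = 0"
    using st(2) by (simp add: vector_matrix_left_distrib scalar_vector_matrix_assoc)
  ultimately have "?z = 0" using inj unfolding jointly_injective_def by blast
  then have "s = 0 \<and> t = 0"
    by (rule cross_neq_0_imp_independent[OF \<open>cross z1 z2 \<noteq> 0\<close>])
  with st(1) show False by blast
qed

lemma commuting_singular_eq_0:
  assumes sym: "\<forall>\<kappa> i j. BK \<kappa> i j = BK \<kappa> j i" and nd: "phi_nondegenerate BK"
    and inj: "jointly_injective M N" and com: "phi_commuting BK M N" and "det M = 0"
  shows "M = 0"
proof (rule ccontr)
  assume "M \<noteq> 0"
  then obtain k where "M$k \<noteq> 0" by (metis vec_eq_iff zero_index)
  have "\<exists>t. M$i = t *s M$k" for i
    using commuting_singular_rows_collinear[OF nd inj com \<open>det M = 0\<close>]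
    by (rule cross_eq_0_imp_collinear) (rule \<open>M$k \<noteq> 0\<close>)
  then obtain t where t: "\<And>i. M$i = t i *s M$k" by metis
  have "t k \<noteq> 0"
    using t[of k] \<open>M$k \<noteq> 0\<close> by (metis vector_smult_lzero)
  then have "(\<chi> i. t i) \<noteq> 0"
    by (metis vec_lambda_beta zero_index)
  moreover have "M$i = (\<chi> i. t i)$i *s M$k" for i
    unfolding vec_lambda_beta by (rule t)
  ultimately show False
    by (intro commuting_not_rank_one[OF sym nd inj com _ _ \<open>M$k \<noteq> 0\<close>])
qed

lemma vector_matrix_eq_0_if_det_neq_0:
  fixes M :: "'a::field^'n^'n"
  assumes "det M \<noteq> 0" and "z v* M = 0"
  shows "z = 0"
proof -
  have "invertible M" using assms(1) by (simp add: invertible_det_nz)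
  then obtain B where "M ** B = mat 1" by (auto simp: invertible_right_inverse)
  then have "z = (z v* M) v* B" by (simp add: vector_matrix_mul_assoc)
  then show ?thesis using assms(2) by simp
qed

lemma jointly_injective_if_det_neq_0:
  fixes M N :: "'a::field^'n^'n"
  shows "det N \<noteq> 0 \<Longrightarrow> jointly_injective M N"
  unfolding jointly_injective_def using vector_matrix_eq_0_if_det_neq_0 by blast

lemma jointly_injective_commute: "jointly_injective M N \<longleftrightarrow> jointly_injective N M"
  unfolding jointly_injective_def by blast

lemma jointly_injective_mat:
  fixes a c :: "'a::field"
  assumes "a \<noteq> 0 \<or> c \<noteq> 0"
  shows "jointly_injective (mat a :: 'a^'n^'n) (mat c)"
  using assms by (simp add: jointly_injective_def)

lemma cubic_has_root:
  fixes c0 c1 c2 c3 :: "'a::alg_closed_field"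
  assumes "c3 \<noteq> 0"
  shows "\<exists>x. c0 + c1 * x + c2 * x^2 + c3 * x^3 = 0"
proof -
  have "Polynomial.degree [:c0, c1, c2, c3:] > 0" using assms by simp
  then obtain x where "Polynomial.poly [:c0, c1, c2, c3:] x = 0"
    using alg_closed_imp_poly_has_root by blast
  then show ?thesis by (auto simp: algebra_simps power2_eq_square power3_eq_cube)
qed

lemma det_pencil:
  fixes M N :: "'a::comm_ring_1^3^3"
  shows "det (N - M ** mat l) = det N - (\<Sum>i\<in>UNIV. det (replace_row N i (M$i))) * l
      + (\<Sum>i\<in>UNIV. det (replace_row M i (N$i))) * l^2 - det M * l^3"
  by (simp add: det_3 replace_row_def sum_3 power2_eq_square power3_eq_cube algebra_simps)

lemma det_pencil_has_root:
  fixes M N :: "'a::alg_closed_field^3^3"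
  assumes "det M \<noteq> 0"
  shows "\<exists>l. det (N - M ** mat l) = 0"
proof -
  have "\<exists>l. det N + - (\<Sum>i\<in>UNIV. det (replace_row N i (M$i))) * l
      + (\<Sum>i\<in>UNIV. det (replace_row M i (N$i))) * l^2 + - det M * l^3 = 0"
    by (rule cubic_has_root) (simp add: assms)
  then show ?thesis by (simp add: det_pencil)
qed

lemma det_to_ac: "det (\<chi> i j. to_ac (M$i$j)) = to_ac (det (M::'a::field^3^3))"
  by (simp add: det_3)

lemma phi_commuting_to_ac:
  assumes "phi_commuting BK M N"
  shows "phi_commuting (\<lambda>\<kappa> i j. to_ac (BK \<kappa> i j))
    (\<chi> i j. to_ac (M$i$j)) (\<chi> i j. to_ac (N$i$j))"
  using assms by (simp add: phi_commuting_def phiB_to_ac)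

lemma commuting_invertible_proportional:
  fixes BK :: "3 \<Rightarrow> 3 \<Rightarrow> 3 \<Rightarrow> 'a::field"
  assumes sym: "\<forall>\<kappa> i j. BK \<kappa> i j = BK \<kappa> j i"
    and nd: "phi_nondegenerate (\<lambda>\<kappa> i j. to_ac (BK \<kappa> i j))"
    and com: "phi_commuting BK M N" and "det M \<noteq> 0"
  shows "\<exists>\<mu>. N = M ** mat \<mu>"
proof -
  let ?BK = "\<lambda>\<kappa> i j. to_ac (BK \<kappa> i j)"
  let ?M = "\<chi> i j. to_ac (M$i$j)" and ?N = "\<chi> i j. to_ac (N$i$j)"
  have sym': "\<forall>\<kappa> i j. ?BK \<kappa> i j = ?BK \<kappa> j i" using sym by simp
  have "det ?M \<noteq> 0" using \<open>det M \<noteq> 0\<close> by (simp add: det_to_ac)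
  then obtain l where l: "det (?N - ?M ** mat l) = 0"
    using det_pencil_has_root by blast
  have "phi_commuting ?BK (?N - ?M ** mat l) ?M"
    using phi_commuting_swap[OF sym' phi_commuting_pencil[OF sym' phi_commuting_to_ac[OF com]]] .
  moreover have "jointly_injective (?N - ?M ** mat l) ?M"
    using \<open>det ?M \<noteq> 0\<close> by (rule jointly_injective_if_det_neq_0)
  ultimately have "?N - ?M ** mat l = 0"
    using commuting_singular_eq_0[OF sym' nd] l by blast
  then have N_eq: "to_ac (N$i$j) = l * to_ac (M$i$j)" for i j
    by (simp add: vec_eq_iff)
  have "M \<noteq> 0" using \<open>det M \<noteq> 0\<close> by (auto simp: det_3)
  then obtain i0 j0 where "M$i0$j0 \<noteq> 0" by (metis vec_eq_iff zero_index)
  define \<mu> where "\<mu> = N$i0$j0 / M$i0$j0"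
  have "l = to_ac \<mu>"
    using N_eq[of i0 j0] \<open>M$i0$j0 \<noteq> 0\<close> by (simp add: \<mu>_def field_simps)
  then have "N$i$j = \<mu> * M$i$j" for i j
    using N_eq[of i j] by (simp flip: to_ac_mult)
  then show ?thesis by (auto simp: vec_eq_iff mult.commute)
qed

lemma commuting_pair_classification:
  fixes BK :: "3 \<Rightarrow> 3 \<Rightarrow> 3 \<Rightarrow> 'a::field"
  assumes sym: "\<forall>\<kappa> i j. BK \<kappa> i j = BK \<kappa> j i"
    and nd: "phi_nondegenerate (\<lambda>\<kappa> i j. to_ac (BK \<kappa> i j))"
    and inj: "jointly_injective M N" and com: "phi_commuting BK M N"
  shows "\<exists>G a c. invertible G \<and> (a \<noteq> 0 \<or> c \<noteq> 0) \<and> M = G ** mat a \<and> N = G ** mat c"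
proof (cases "det M = 0")
  case True
  have nd': "phi_nondegenerate BK" using nd by (rule phi_nondegenerate_of_to_ac)
  have "M = 0" using commuting_singular_eq_0[OF sym nd' inj com True] .
  have "det N \<noteq> 0"
  proof
    assume "det N = 0"
    moreover have "jointly_injective N M" using inj jointly_injective_commute by blast
    ultimately have "N = 0"
      using commuting_singular_eq_0[OF sym nd' _ phi_commuting_swap[OF sym com]] by blast
    then have "axis 1 1 v* M = 0" "axis 1 1 v* N = 0"
      using \<open>M = 0\<close> by simp_all
    then have "(axis 1 1 :: 'a^3) = 0"
      using inj unfolding jointly_injective_def by blast
    then show False by (simp add: axis_eq_0_iff)
  qed
  moreover have "M = N ** mat 0" using \<open>M = 0\<close> by (simp add: vec_eq_iff)
  ultimately show ?thesis
    by (intro exI[of _ N] exI[of _ 0] exI[of _ 1]) (simp add: invertible_det_nz)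
next
  case False
  then obtain \<mu> where "N = M ** mat \<mu>"
    using commuting_invertible_proportional[OF sym nd com] by blast
  then show ?thesis using False
    by (intro exI[of _ M] exI[of _ 1] exI[of _ \<mu>]) (simp add: invertible_det_nz)
qed

section \<open>Three-dimensional abelian subspaces of \<open>V\<close>\<close>

lemma vector_space_gscale: "vector_space (gscale :: 'a::field \<Rightarrow> 'a gelem \<Rightarrow> 'a gelem)"
  by unfold_locales (auto simp: gscale_def case_prod_beta prod_eq_iff algebra_simps)

definition V_row_space :: "'a::field^3^3 \<Rightarrow> 'a^3^3 \<Rightarrow> 'a gelem set" where
  "V_row_space M N = range (\<lambda>z. (z v* M, z v* N, 0))"

lemma linear_V_row_map:
  "Vector_Spaces.linear (*s) gscale (\<lambda>z::'a::field^3. (z v* M, z v* N, 0::'a^3))"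
  unfolding Vector_Spaces.linear_iff
  using vec.vector_space_axioms vector_space_gscale
  by (simp add: gscale_def vector_matrix_left_distrib scalar_vector_matrix_assoc)

lemma V_row_space_subset_Vsub: "V_row_space M N \<subseteq> Vsub"
  by (auto simp: V_row_space_def Vsub_def)

lemma subspace_V_row_space: "module.subspace gscale (V_row_space M N)"
proof -
  interpret P: vector_space_pair "(*s) :: 'a \<Rightarrow> 'a^3 \<Rightarrow> 'a^3"
      "gscale :: 'a \<Rightarrow> 'a gelem \<Rightarrow> 'a gelem"
    using vec.vector_space_axioms vector_space_gscale by (rule vector_space_pair.intro)
  show ?thesis
    unfolding V_row_space_def
    by (rule P.linear_subspace_image[OF linear_V_row_map vec.subspace_UNIV])
qed

lemma gdim_V_row_space:
  assumes "jointly_injective M N"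
  shows "gdim (V_row_space M N) = 3"
proof -
  interpret P: finite_dimensional_vector_space_pair_1 "(*s) :: 'a \<Rightarrow> 'a^3 \<Rightarrow> 'a^3"
      cart_basis "gscale :: 'a \<Rightarrow> 'a gelem \<Rightarrow> 'a gelem"
    using vec.finite_dimensional_vector_space_axioms vector_space_gscale
    by (rule finite_dimensional_vector_space_pair_1.intro)
  have "inj (\<lambda>z::'a^3. (z v* M, z v* N, 0::'a^3))"
    using assms
    by (simp add: P.linear_inj_iff_eq_0[OF linear_V_row_map] jointly_injective_def zero_prod_def)
  then have "gdim (V_row_space M N) = vec.dim (UNIV :: ('a^3) set)"
    unfolding gdim_def V_row_space_def by (intro P.dim_image_eq[OF linear_V_row_map]) simp
  then show ?thesis by (simp add: card_cart_basis)
qed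

lemma abelian_V_row_space_iff:
  "abelian_subalgebra BK (V_row_space M N) \<longleftrightarrow> phi_commuting BK M N"
proof
  assume "abelian_subalgebra BK (V_row_space M N)"
  then have "gbracket BK (axis i 1 v* M, axis i 1 v* N, 0) (axis j 1 v* M, axis j 1 v* N, 0)
      = (0, 0, 0)" for i j
    unfolding abelian_subalgebra_def V_row_space_def by blast
  then show "phi_commuting BK M N"
    by (simp add: phi_commuting_def gbracket_def)
next
  assume "phi_commuting BK M N"
  then have bracket: "gbracket BK (z v* M, z v* N, 0) (z' v* M, z' v* N, 0) = (0, 0, 0)" for z z'
    by (simp add: gbracket_def phi_commuting_vector_matrix_both)
  show "abelian_subalgebra BK (V_row_space M N)"
    unfolding abelian_subalgebra_def using subspace_V_row_space
    by (auto simp: V_row_space_def bracket)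
qed

lemma V_row_space_mult_invertible:
  assumes "invertible G"
  shows "V_row_space (G ** M) (G ** N) = V_row_space M N"
proof -
  obtain H where "H ** G = mat 1" using assms invertible_def by blast
  then have "y = (y v* H) v* G" for y
    by (simp add: vector_matrix_mul_assoc)
  then have "range (\<lambda>z. z v* G) = UNIV" by (metis surj_def)
  moreover have
    "V_row_space (G ** M) (G ** N) = (\<lambda>z. (z v* M, z v* N, 0)) ` range (\<lambda>z. z v* G)"
    unfolding V_row_space_def image_image by (simp add: vector_matrix_mul_assoc)
  ultimately show ?thesis unfolding V_row_space_def by simp
qed

lemma psi_image_Usub: "psi (a, b, c, d) ` Usub = V_row_space (mat a) (mat c)"
proof -
  have Usub_eq: "Usub = range (\<lambda>u. (u, 0, 0))" by (auto simp: Usub_def)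
  show ?thesis unfolding Usub_eq by (simp add: V_row_space_def image_image psi_def)
qed

lemma subspace_Vsub_dim3_eq_V_row_space:
  fixes S :: "'a::field gelem set"
  assumes "module.subspace gscale S" and "gdim S = 3" and "S \<subseteq> Vsub"
  obtains M N where "jointly_injective M N" and "S = V_row_space M N"
proof -
  interpret P: vector_space_pair "(*s) :: 'a \<Rightarrow> 'a^3 \<Rightarrow> 'a^3"
      "gscale :: 'a \<Rightarrow> 'a gelem \<Rightarrow> 'a gelem"
    using vec.vector_space_axioms vector_space_gscale by (rule vector_space_pair.intro)
  obtain C where C: "C \<subseteq> S" "P.vs2.independent C" "S \<subseteq> P.vs2.span C" "card C = P.vs2.dim S"
    using P.vs2.basis_exists by blast
  then obtain s1 s2 s3 where s: "C = {s1, s2, s3}" "s1 \<noteq> s2" "s2 \<noteq> s3" "s1 \<noteq> s3"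
    using assms(2) by (auto simp: gdim_def card_3_iff)
  have "s1 \<in> Vsub" "s2 \<in> Vsub" "s3 \<in> Vsub" using C(1) assms(3) s(1) by auto
  then obtain u1 w1 u2 w2 u3 w3 where uw: "s1 = (u1, w1, 0)" "s2 = (u2, w2, 0)" "s3 = (u3, w3, 0)"
    unfolding Vsub_def by blast
  define M where "M = (vector [u1, u2, u3] :: 'a^3^3)"
  define N where "N = (vector [w1, w2, w3] :: 'a^3^3)"
  let ?g = "\<lambda>z::'a^3. (z v* M, z v* N, 0::'a^3)"
  have cart_basis_3: "cart_basis = {axis 1 1, axis 2 1, axis 3 1 :: 'a^3}"
    by (auto simp: cart_basis_def UNIV_3)
  have basis_image: "?g ` cart_basis = C"
    unfolding cart_basis_3 s(1) uw by (simp add: M_def N_def)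
  have "inj_on ?g cart_basis"
    using s(2-4) unfolding cart_basis_3 uw by (auto simp: M_def N_def axis_eq_axis)
  then have "inj_on ?g (vec.span cart_basis)"
    by (intro P.linear_inj_on_span_independent_image[OF linear_V_row_map])
      (simp_all add: basis_image C(2))
  then have "inj ?g" by simp
  then have "jointly_injective M N"
    unfolding jointly_injective_def by (metis (mono_tags) injD vector_matrix_mult_0)
  moreover have "S = V_row_space M N"
  proof -
    have "V_row_space M N = P.vs2.span C"
      unfolding V_row_space_def basis_image[symmetric] P.linear_span_image[OF linear_V_row_map]
      by simp
    also have "\<dots> = S" by (rule P.vs2.span_subspace[OF C(1) C(3) assms(1)])
    finally show ?thesis ..
  qed
  ultimately show ?thesis by (rule that)
qed

lemma abelian_dim3_subspace_Vsub_iff: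
  fixes BK :: "3 \<Rightarrow> 3 \<Rightarrow> 3 \<Rightarrow> 'a::field"
  assumes sym: "\<forall>\<kappa> i j. BK \<kappa> i j = BK \<kappa> j i"
    and nd: "phi_nondegenerate (\<lambda>\<kappa> i j. to_ac (BK \<kappa> i j))"
  shows "abelian_subalgebra BK S \<and> gdim S = 3 \<and> S \<subseteq> Vsub \<longleftrightarrow>
    (\<exists>a c. (a \<noteq> 0 \<or> c \<noteq> 0) \<and> S = V_row_space (mat a) (mat c))"
proof
  assume S: "abelian_subalgebra BK S \<and> gdim S = 3 \<and> S \<subseteq> Vsub"
  then have "module.subspace gscale S" by (simp add: abelian_subalgebra_def)
  then obtain M N where inj: "jointly_injective M N" and S_eq: "S = V_row_space M N"
    using subspace_Vsub_dim3_eq_V_row_space S by blast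
  have "phi_commuting BK M N"
    using S unfolding S_eq abelian_V_row_space_iff by blast
  then obtain G a c where G: "invertible G" and ac: "a \<noteq> 0 \<or> c \<noteq> 0"
    and MN: "M = G ** mat a" "N = G ** mat c"
    using commuting_pair_classification[OF sym nd inj] by blast
  have "S = V_row_space (mat a) (mat c)"
    unfolding S_eq MN by (rule V_row_space_mult_invertible[OF G])
  with ac show "\<exists>a c. (a \<noteq> 0 \<or> c \<noteq> 0) \<and> S = V_row_space (mat a) (mat c)" by blast
next
  assume "\<exists>a c. (a \<noteq> 0 \<or> c \<noteq> 0) \<and> S = V_row_space (mat a) (mat c)"
  then obtain a c where ac: "a \<noteq> 0 \<or> c \<noteq> 0" and S_eq: "S = V_row_space (mat a) (mat c)"
    by blast
  from ac have "jointly_injective (mat a :: 'a^3^3) (mat c)" by (rule jointly_injective_mat)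
  then show "abelian_subalgebra BK S \<and> gdim S = 3 \<and> S \<subseteq> Vsub"
    unfolding S_eq
    by (simp add: abelian_V_row_space_iff phi_commuting_mat[OF sym] gdim_V_row_space
        V_row_space_subset_Vsub)
qed

theorem proposition4p10:
  fixes k :: "complex set" and r :: int and f :: "complex \<Rightarrow> 'K::field"
    and B :: "3 \<Rightarrow> 3 \<Rightarrow> 3 \<Rightarrow> complex"
  assumes "number_field k"
    and "r \<noteq> 0"
    and "ring_hom_on (loc_ring k r) f"
    and "\<forall>\<kappa> i j. B \<kappa> i j \<in> loc_ring k r"
    and "\<forall>\<kappa> i j. B \<kappa> i j = B \<kappa> j i"
    and "elliptic_over k B"
    and "elliptic_over k (dual_coeffs B)"
    and "geom_smooth (\<lambda>\<kappa> i j. f (B \<kappa> i j))"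
    and "geom_smooth (dual_coeffs (\<lambda>\<kappa> i j. f (B \<kappa> i j)))"
  shows "{S. abelian_subalgebra (\<lambda>\<kappa> i j. f (B \<kappa> i j)) S \<and> gdim S = 3 \<and> S \<subseteq> Vsub}
       = {psi (a, b, c, d) ` Usub | a b c d. a * d - b * c \<noteq> 0}"
proof -
  let ?BK = "\<lambda>\<kappa> i j. f (B \<kappa> i j)"
  have sym: "\<forall>\<kappa> i j. ?BK \<kappa> i j = ?BK \<kappa> j i" using assms(5) by simp
  have nd: "phi_nondegenerate (\<lambda>\<kappa> i j. to_ac (?BK \<kappa> i j))"
    using assms(9) by (rule geom_smooth_dual_imp_phi_nondegenerate)
  have first_column: "(\<exists>b d. a * d - b * c \<noteq> 0) \<longleftrightarrow> a \<noteq> 0 \<or> c \<noteq> 0" for a c :: 'K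
  proof
    assume "a \<noteq> 0 \<or> c \<noteq> 0"
    then have "a * 1 - 0 * c \<noteq> 0 \<or> a * 0 - (- 1) * c \<noteq> 0" by simp
    then show "\<exists>b d. a * d - b * c \<noteq> 0" by blast
  qed auto
  show ?thesis
  proof (rule Set.set_eqI)
    fix S
    have "S \<in> {S. abelian_subalgebra ?BK S \<and> gdim S = 3 \<and> S \<subseteq> Vsub} \<longleftrightarrow>
        (\<exists>a c. (\<exists>b d. a * d - b * c \<noteq> 0) \<and> S = V_row_space (mat a) (mat c))"
      unfolding mem_Collect_eq abelian_dim3_subspace_Vsub_iff[OF sym nd] first_column ..
    also have "\<dots> \<longleftrightarrow> S \<in> {psi (a, b, c, d) ` Usub | a b c d. a * d - b * c \<noteq> 0}"
      unfolding psi_image_Usub by blast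
    finally show "S \<in> {S. abelian_subalgebra ?BK S \<and> gdim S = 3 \<and> S \<subseteq> Vsub} \<longleftrightarrow>
        S \<in> {psi (a, b, c, d) ` Usub | a b c d. a * d - b * c \<noteq> 0}" .
  qed
qed

end
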